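(* Let $M$ be a matching of size $k$ and let $N$ be a matching of size $k+2$ having a block $K$ such that $N-K$ equals $M$ up to cyclic relabeling. Then the degree of $N$ in $\mathbf{DCM}_{k+2}$ equals the degree of $M$ in $\mathbf{DCM}_k$.
   Context: Let $k\ge 1$ and let $X_{2k}=\{P_1,\dots,P_{2k}\}$ be $2k$ points in convex position in the plane, labeled in clockwise cyclic order; indices are taken modulo $2k$. A matching of $X_{2k}$ means a set of $k$ pairwise non-crossing straight segments (edges) with endpoints in $X_{2k}$ covering every point exactly once; its size is $k$. Two matchings $M,M'$ of $X_{2k}$ are disjoint compatible if they have no common edge and no edge of $M$ crosses an edge of $M'$. $\mathbf{DCM}_k$ is the graph whose vertices are the matchings of $X_{2k}$, two being adjacent iff they are disjoint compatible; the degree of a vertex of $\mathbf{DCM}_k$ is invariant under cyclic relabeling of the points. A block of a matching $M$ is a pair of edges $\{P_iP_{i+3},P_{i+1}P_{i+2}\}\subseteq M$; an antiblock is a pair of edges $\{P_iP_{i+1},P_{i+2}P_{i+3}\}\subseteq M$; a separated pair is a block or an antiblock. If $K$ is a separated pair of a matching $N$ of size $k+2$, then $N-K$ denotes the set $N\setminus K$, regarded as a matching of the remaining $2k$ points (which are in convex position) with their inherited cyclic order, i.e. as a matching of size $k$ defined up to cyclic relabeling. *)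

theory Defs
  imports Main
begin

text \<open>Points P_1..P_{2k} are encoded as the labels 0..2k-1 in clockwise order. Two chords of points in convex position
  cross iff their endpoints interleave in the cyclic (equivalently, linear) order.\<close>

definition crosses :: "nat set \<Rightarrow> nat set \<Rightarrow> bool" where
  "crosses e f \<longleftrightarrow>
     (\<exists>a b c d. ((e = {a,b} \<and> f = {c,d}) \<or> (e = {c,d} \<and> f = {a,b})) \<and> a < c \<and> c < b \<and> b < d)"

definition is_matching :: "nat \<Rightarrow> nat set set \<Rightarrow> bool" where
  "is_matching k M \<longleftrightarrow>
     (\<forall>e\<in>M. \<exists>a b. e = {a,b} \<and> a < b \<and> b < 2*k) \<and>
     (\<forall>v<2*k. \<exists>!e. e \<in> M \<and> v \<in> e) \<and>
     (\<forall>e\<in>M. \<forall>f\<in>M. \<not> crosses e f)"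

definition disjoint_compatible :: "nat set set \<Rightarrow> nat set set \<Rightarrow> bool" where
  "disjoint_compatible M M' \<longleftrightarrow> M \<inter> M' = {} \<and> (\<forall>e\<in>M. \<forall>f\<in>M'. \<not> crosses e f)"

definition dcm_degree :: "nat \<Rightarrow> nat set set \<Rightarrow> nat" where
  "dcm_degree k M = card {M'. is_matching k M' \<and> disjoint_compatible M M'}"

definition rot :: "nat \<Rightarrow> nat \<Rightarrow> nat set set \<Rightarrow> nat set set" where
  "rot m s M = (\<lambda>e. (\<lambda>x. (x + s) mod m) ` e) ` M"

definition block_at :: "nat \<Rightarrow> nat \<Rightarrow> nat set set" where
  "block_at n i = {{i mod (2*n), (i+3) mod (2*n)}, {(i+1) mod (2*n), (i+2) mod (2*n)}}"

text \<open>N minus the pair K at position i (occupying points i..i+3), the remaining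
  2n-4 points relabeled in inherited cyclic order as 0..2n-5, point i+4 becoming 0.\<close>
definition remove_pair :: "nat \<Rightarrow> nat \<Rightarrow> nat set set \<Rightarrow> nat set set \<Rightarrow> nat set set" where
  "remove_pair n i K N =
     (\<lambda>e. (\<lambda>x. (x + 2*n - (i+4) mod (2*n)) mod (2*n)) ` e) ` (N - K)"

end

theory Submission
  imports Defs
begin

text \<open>
  Two chords cross iff their endpoints alternate in the cyclic
  order of the points, so every relabeling of the points that preserves the
  cyclic order (in particular every rotation) maps matchings to matchings,
  preserves disjoint compatibility and hence preserves degrees in DCM.
  After a rotation we may therefore assume that the block of N occupies the
  last four points 2k, ..., 2k+3, i.e. consists of the edges {2k,2k+3} and
  {2k+1,2k+2}.  A matching Y that is disjoint compatible with N must then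
  match 2k+1 and 2k+2 to the outer points 2k and 2k+3 in the only
  non-crossing way, so Y contains the antiblock {2k,2k+1}, {2k+2,2k+3}.
  Deleting this antiblock is a bijection between the neighbours of N in
  DCM_{k+2} and the neighbours of N minus the block in DCM_k, whose inverse
  adds the antiblock back.
\<close>

section \<open>Crossings and cyclic order\<close>

definition cyclic :: "nat \<Rightarrow> nat \<Rightarrow> nat \<Rightarrow> bool" where
  "cyclic a b c \<longleftrightarrow> (a < b \<and> b < c) \<or> (b < c \<and> c < a) \<or> (c < a \<and> a < b)"

lemma crosses_intro1: "w < x \<Longrightarrow> x < y \<Longrightarrow> y < z \<Longrightarrow> crosses {w,y} {x,z}"
  unfolding crosses_def by blast

lemma crosses_intro2: "w < x \<Longrightarrow> x < y \<Longrightarrow> y < z \<Longrightarrow> crosses {x,z} {w,y}"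
  unfolding crosses_def by blast

lemma crosses_sym: "crosses e f \<longleftrightarrow> crosses f e"
  unfolding crosses_def by blast

lemma crosses_disjoint: "crosses e f \<Longrightarrow> e \<inter> f = {}"
  unfolding crosses_def by auto

lemma not_crosses_separated: "\<forall>x\<in>e. x < L \<Longrightarrow> \<forall>y\<in>f. L \<le> y \<Longrightarrow> \<not> crosses e f"
  unfolding crosses_def by force

lemma crosses_iff_cyclic:
  "crosses {a,b} {c,d} \<longleftrightarrow> (cyclic a c b \<and> cyclic b d a) \<or> (cyclic a d b \<and> cyclic b c a)"
proof
  assume "crosses {a,b} {c,d}"
  then show "(cyclic a c b \<and> cyclic b d a) \<or> (cyclic a d b \<and> cyclic b c a)"
    unfolding crosses_def cyclic_def by (auto simp: doubleton_eq_iff)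
next
  assume "(cyclic a c b \<and> cyclic b d a) \<or> (cyclic a d b \<and> cyclic b c a)"
  then show "crosses {a,b} {c,d}"
    unfolding cyclic_def
    by (elim disjE conjE; (metis crosses_intro1 crosses_intro2 insert_commute less_asym)?)
qed

lemma matching_edge: "is_matching p X \<Longrightarrow> e \<in> X \<Longrightarrow> \<exists>a b. e = {a,b} \<and> a < b \<and> b < 2*p"
  unfolding is_matching_def by blast

lemma matching_edge_subset: "is_matching p X \<Longrightarrow> e \<in> X \<Longrightarrow> e \<subseteq> {..<2*p}"
  by (drule (1) matching_edge) auto

lemma matching_edge_unique:
  "is_matching p X \<Longrightarrow> e \<in> X \<Longrightarrow> e' \<in> X \<Longrightarrow> v \<in> e \<Longrightarrow> v \<in> e' \<Longrightarrow> v < 2*p \<Longrightarrow> e = e'"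
  unfolding is_matching_def by blast

lemma matching_noncrossing: "is_matching p X \<Longrightarrow> e \<in> X \<Longrightarrow> f \<in> X \<Longrightarrow> \<not> crosses e f"
  unfolding is_matching_def by blast

lemma matching_partner:
  assumes X: "is_matching p X" and v: "v < 2*p"
  shows "\<exists>x. x \<noteq> v \<and> x < 2*p \<and> {v,x} \<in> X"
proof -
  obtain e where e: "e \<in> X" "v \<in> e" using X v unfolding is_matching_def by blast
  obtain a b where "e = {a,b}" "a < b" "b < 2*p" using matching_edge[OF X e(1)] by blast
  then show ?thesis using e by (auto simp: insert_commute)
qed

section \<open>Relabelings preserving the cyclic order\<close>

definition preserves_cyclic_order :: "nat set \<Rightarrow> (nat \<Rightarrow> nat) \<Rightarrow> bool" where
  "preserves_cyclic_order U \<phi> \<longleftrightarrow>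
     (\<forall>a\<in>U. \<forall>b\<in>U. \<forall>c\<in>U. cyclic (\<phi> a) (\<phi> b) (\<phi> c) = cyclic a b c)"

definition relabel :: "(nat \<Rightarrow> nat) \<Rightarrow> nat set set \<Rightarrow> nat set set" where
  "relabel \<phi> X = (\<lambda>e. \<phi> ` e) ` X"

definition rotation :: "nat \<Rightarrow> nat \<Rightarrow> nat \<Rightarrow> nat" where
  "rotation m t x = (x + t) mod m"

lemma rotation_eq_if:
  fixes x m t :: nat assumes "x < m"
  shows "rotation m t x = (if x + t mod m < m then x + t mod m else x + t mod m - m)"
proof -
  have "t mod m < m" using assms by simp
  then have "x + t mod m < 2*m" using assms by linarith
  then have "(x + t mod m) mod m = (if x + t mod m < m then x + t mod m else x + t mod m - m)"
    by (simp add: le_mod_geq)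
  then show ?thesis unfolding rotation_def by (simp add: mod_add_right_eq)
qed

lemma cyclic_shift:
  fixes a b c t m :: nat assumes "a < m" "b < m" "c < m" "t < m"
  shows "cyclic (if a + t < m then a + t else a + t - m) (if b + t < m then b + t else b + t - m)
     (if c + t < m then c + t else c + t - m) = cyclic a b c"
  using assms unfolding cyclic_def by (auto split: if_splits)

lemma rotation_preserves_cyclic_order:
  assumes "0 < m" shows "preserves_cyclic_order {..<m} (rotation m t)"
  unfolding preserves_cyclic_order_def
proof (intro ballI)
  fix a b c assume "a \<in> {..<m}" "b \<in> {..<m}" "c \<in> {..<m}"
  moreover have "t mod m < m" using assms by simp
  ultimately show "cyclic (rotation m t a) (rotation m t b) (rotation m t c) = cyclic a b c"
    by (simp add: rotation_eq_if cyclic_shift)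
qed

lemma rotation_bij:
  assumes "0 < m" shows "bij_betw (rotation m t) {..<m} {..<m}"
proof -
  have inj: "inj_on (rotation m t) {..<m}"
  proof (rule inj_onI)
    fix x y assume "x \<in> {..<m}" "y \<in> {..<m}" "rotation m t x = rotation m t y"
    moreover have "t mod m < m" using assms by simp
    ultimately show "x = y" by (simp add: rotation_eq_if split: if_splits)
  qed
  have "rotation m t ` {..<m} \<subseteq> {..<m}" using assms by (auto simp: rotation_def)
  then have "rotation m t ` {..<m} = {..<m}" using inj by (intro endo_inj_surj) simp_all
  with inj show ?thesis by (simp add: bij_betw_def)
qed

lemma preserves_cyclic_order_inv:
  assumes "bij_betw \<phi> U U" "preserves_cyclic_order U \<phi>"
  shows "preserves_cyclic_order U (inv_into U \<phi>)"
  unfolding preserves_cyclic_order_def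
proof (intro ballI)
  fix a b c assume abc: "a \<in> U" "b \<in> U" "c \<in> U"
  let ?g = "inv_into U \<phi>"
  have "\<And>x. x \<in> U \<Longrightarrow> ?g x \<in> U" "\<And>x. x \<in> U \<Longrightarrow> \<phi> (?g x) = x"
    using assms(1) by (auto simp: bij_betw_def inv_into_into f_inv_into_f)
  then show "cyclic (?g a) (?g b) (?g c) = cyclic a b c"
    using assms(2) abc unfolding preserves_cyclic_order_def by metis
qed

lemma relabel_cancel:
  assumes "\<And>x. x \<in> U \<Longrightarrow> \<psi> (\<phi> x) = x" and "\<forall>e\<in>X. e \<subseteq> U"
  shows "relabel \<psi> (relabel \<phi> X) = X"
proof -
  have "\<psi> ` \<phi> ` e = e" if "e \<in> X" for e
    using assms that by (force simp: image_image)
  then show ?thesis unfolding relabel_def image_image by simp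
qed

lemma crosses_relabel:
  assumes inj: "inj_on \<phi> {..<2*p}" and cyc: "preserves_cyclic_order {..<2*p} \<phi>"
    and X: "is_matching p X" and Y: "is_matching p Y" and e: "e \<in> X" and f: "f \<in> Y"
  shows "crosses (\<phi> ` e) (\<phi> ` f) = crosses e f"
proof -
  obtain a b where "e = {a,b}" "a < b" "b < 2*p" using matching_edge[OF X e] by blast
  moreover obtain c d where "f = {c,d}" "c < d" "d < 2*p" using matching_edge[OF Y f] by blast
  ultimately show ?thesis
    using inj cyc unfolding preserves_cyclic_order_def by (simp add: crosses_iff_cyclic)
qed

lemma matching_relabel:
  assumes bij: "bij_betw \<phi> {..<2*p} {..<2*p}" and cyc: "preserves_cyclic_order {..<2*p} \<phi>"
    and X: "is_matching p X"
  shows "is_matching p (relabel \<phi> X)"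
proof -
  have inj: "inj_on \<phi> {..<2*p}" and onto: "\<phi> ` {..<2*p} = {..<2*p}"
    using bij by (auto simp: bij_betw_def)
  have "\<exists>a b. E = {a,b} \<and> a < b \<and> b < 2*p" if E: "E \<in> relabel \<phi> X" for E
  proof -
    obtain e where e: "e \<in> X" "E = \<phi> ` e" using E unfolding relabel_def by blast
    obtain a b where ab: "e = {a,b}" "a < b" "b < 2*p" using matching_edge[OF X e(1)] by blast
    have "\<phi> a \<noteq> \<phi> b" using inj ab by (auto dest: inj_onD)
    moreover have "\<phi> a < 2*p" "\<phi> b < 2*p" using onto ab by auto
    ultimately show ?thesis using e ab
    proof (cases "\<phi> a < \<phi> b")
      case False
      then have "\<phi> b < \<phi> a" using \<open>\<phi> a \<noteq> \<phi> b\<close> by simp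
      then show ?thesis using e ab \<open>\<phi> a < 2*p\<close>
        by (intro exI[of _ "\<phi> b"] exI[of _ "\<phi> a"]) auto
    qed auto
  qed
  moreover have "\<exists>!E. E \<in> relabel \<phi> X \<and> v \<in> E" if v: "v < 2*p" for v
  proof -
    obtain u where u: "u < 2*p" "v = \<phi> u" using onto v by (metis imageE lessThan_iff)
    obtain e where e: "e \<in> X" "u \<in> e" using X u unfolding is_matching_def by blast
    show ?thesis
    proof (rule ex1I[of _ "\<phi> ` e"])
      show "\<phi> ` e \<in> relabel \<phi> X \<and> v \<in> \<phi> ` e" using e u by (auto simp: relabel_def)
    next
      fix E assume E: "E \<in> relabel \<phi> X \<and> v \<in> E"
      then obtain e' where e': "e' \<in> X" "E = \<phi> ` e'" by (auto simp: relabel_def)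
      have "u \<in> e'" using matching_edge_subset[OF X e'(1)] E e' u inj by (auto simp: inj_on_def)
      then show "E = \<phi> ` e" using matching_edge_unique[OF X e'(1) e(1)] e' e u by auto
    qed
  qed
  moreover have "\<not> crosses E F" if "E \<in> relabel \<phi> X" "F \<in> relabel \<phi> X" for E F
    using that crosses_relabel[OF inj cyc X X] matching_noncrossing[OF X]
    unfolding relabel_def by auto
  ultimately show ?thesis unfolding is_matching_def by blast
qed

lemma disjoint_compatible_relabel:
  assumes bij: "bij_betw \<phi> {..<2*p} {..<2*p}" and cyc: "preserves_cyclic_order {..<2*p} \<phi>"
    and X: "is_matching p X" and Y: "is_matching p Y"
  shows "disjoint_compatible (relabel \<phi> X) (relabel \<phi> Y) = disjoint_compatible X Y"
proof -
  have inj: "inj_on \<phi> {..<2*p}" using bij by (auto simp: bij_betw_def)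
  have "inj_on (\<lambda>e. \<phi> ` e) (X \<union> Y)"
    by (rule inj_onI) (metis UnE X Y inj inj_on_image_eq_iff matching_edge_subset)
  then have "relabel \<phi> X \<inter> relabel \<phi> Y = (\<lambda>e. \<phi> ` e) ` (X \<inter> Y)"
    unfolding relabel_def by (simp add: inj_on_image_Int)
  moreover have "(\<forall>E\<in>relabel \<phi> X. \<forall>F\<in>relabel \<phi> Y. \<not> crosses E F) \<longleftrightarrow>
      (\<forall>e\<in>X. \<forall>f\<in>Y. \<not> crosses e f)"
    unfolding relabel_def using crosses_relabel[OF inj cyc X Y] by auto
  ultimately show ?thesis unfolding disjoint_compatible_def by auto
qed

text \<open>Degrees in DCM are invariant under relabelings preserving the cyclic order;
  the relabeling itself is the bijection between the two neighbourhoods.\<close>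
lemma dcm_degree_relabel:
  assumes bij: "bij_betw \<phi> {..<2*p} {..<2*p}" and cyc: "preserves_cyclic_order {..<2*p} \<phi>"
    and X: "is_matching p X"
  shows "dcm_degree p (relabel \<phi> X) = dcm_degree p X"
proof -
  let ?U = "{..<2*p}"
  let ?g = "inv_into ?U \<phi>"
  have bij_g: "bij_betw ?g ?U ?U" using bij by (rule bij_betw_inv_into)
  have cyc_g: "preserves_cyclic_order ?U ?g" using bij cyc by (rule preserves_cyclic_order_inv)
  have g_phi: "relabel ?g (relabel \<phi> Z) = Z" if "is_matching p Z" for Z
    using bij matching_edge_subset[OF that] by (intro relabel_cancel[where U = ?U])
      (auto simp: bij_betw_def)
  have phi_g: "relabel \<phi> (relabel ?g Z) = Z" if "is_matching p Z" for Z
    using bij matching_edge_subset[OF that] by (intro relabel_cancel[where U = ?U])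
      (auto simp: bij_betw_def f_inv_into_f)
  have "bij_betw (relabel \<phi>) {Y. is_matching p Y \<and> disjoint_compatible X Y}
      {Y. is_matching p Y \<and> disjoint_compatible (relabel \<phi> X) Y}"
  proof (rule bij_betw_byWitness[where f' = "relabel ?g"])
    show "relabel \<phi> ` {Y. is_matching p Y \<and> disjoint_compatible X Y}
        \<subseteq> {Y. is_matching p Y \<and> disjoint_compatible (relabel \<phi> X) Y}"
      using disjoint_compatible_relabel[OF bij cyc X] matching_relabel[OF bij cyc] by auto
    show "relabel ?g ` {Y. is_matching p Y \<and> disjoint_compatible (relabel \<phi> X) Y}
        \<subseteq> {Y. is_matching p Y \<and> disjoint_compatible X Y}"
      using disjoint_compatible_relabel[OF bij_g cyc_g matching_relabel[OF bij cyc X]]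
        matching_relabel[OF bij_g cyc_g] g_phi[OF X] by auto
  qed (use g_phi phi_g in auto)
  then show ?thesis unfolding dcm_degree_def by (simp add: bij_betw_same_card)
qed

section \<open>A block on the last four points\<close>

definition top_block :: "nat \<Rightarrow> nat set set" where
  "top_block k = {{2*k, 2*k+3}, {2*k+1, 2*k+2}}"

definition top_antiblock :: "nat \<Rightarrow> nat set set" where
  "top_antiblock k = {{2*k, 2*k+1}, {2*k+2, 2*k+3}}"

lemma top_block_covers:
  "\<forall>e\<in>top_block k. e \<subseteq> {2*k..<2*k+4}" "\<forall>v\<in>{2*k..<2*k+4}. \<exists>e\<in>top_block k. v \<in> e"
proof -
  show "\<forall>e\<in>top_block k. e \<subseteq> {2*k..<2*k+4}" unfolding top_block_def by auto
  show "\<forall>v\<in>{2*k..<2*k+4}. \<exists>e\<in>top_block k. v \<in> e"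
  proof
    fix v assume "v \<in> {2*k..<2*k+4}"
    then have "v = 2*k \<or> v = 2*k+1 \<or> v = 2*k+2 \<or> v = 2*k+3" by auto
    then show "\<exists>e\<in>top_block k. v \<in> e" unfolding top_block_def by auto
  qed
qed

lemma top_antiblock_covers:
  "\<forall>e\<in>top_antiblock k. e \<subseteq> {2*k..<2*k+4}" "\<forall>v\<in>{2*k..<2*k+4}. \<exists>e\<in>top_antiblock k. v \<in> e"
proof -
  show "\<forall>e\<in>top_antiblock k. e \<subseteq> {2*k..<2*k+4}" unfolding top_antiblock_def by auto
  show "\<forall>v\<in>{2*k..<2*k+4}. \<exists>e\<in>top_antiblock k. v \<in> e"
  proof
    fix v assume "v \<in> {2*k..<2*k+4}"
    then have "v = 2*k \<or> v = 2*k+1 \<or> v = 2*k+2 \<or> v = 2*k+3" by auto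
    then show "\<exists>e\<in>top_antiblock k. v \<in> e" unfolding top_antiblock_def by auto
  qed
qed

lemma matching_remove_top:
  assumes X: "is_matching (k+2) X" and P: "P \<subseteq> X" "\<forall>e\<in>P. e \<subseteq> {2*k..<2*k+4}"
    "\<forall>v\<in>{2*k..<2*k+4}. \<exists>e\<in>P. v \<in> e"
  shows "(\<forall>e\<in>X - P. e \<subseteq> {..<2*k}) \<and> is_matching k (X - P)"
proof -
  have low: "e \<subseteq> {..<2*k}" if e: "e \<in> X - P" for e
  proof
    fix x assume x: "x \<in> e"
    have x_bound: "x < 2*(k+2)" using matching_edge_subset[OF X] e x by auto
    show "x \<in> {..<2*k}"
    proof (rule ccontr)
      assume "x \<notin> {..<2*k}"
      then have "x \<in> {2*k..<2*k+4}" using x_bound by auto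
      then obtain e' where "e' \<in> P" "x \<in> e'" using P(3) by blast
      then show False using matching_edge_unique[OF X, of e' e x] P(1) e x x_bound by auto
    qed
  qed
  have "is_matching k (X - P)"
    unfolding is_matching_def
  proof (intro conjI ballI allI impI)
    fix e assume e: "e \<in> X - P"
    obtain a b where "e = {a,b}" "a < b" using matching_edge[OF X] e by blast
    moreover have "b < 2*k" using low[OF e] \<open>e = {a,b}\<close> by auto
    ultimately show "\<exists>a b. e = {a, b} \<and> a < b \<and> b < 2 * k" by blast
  next
    fix v assume v: "v < 2*k"
    have "v < 2*(k+2)" using v by simp
    then obtain e where e: "e \<in> X" "v \<in> e" using X unfolding is_matching_def by blast
    have "e \<notin> P"
    proof
      assume "e \<in> P"
      then have "v \<in> {2*k..<2*k+4}" using P(2) e(2) by blast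
      then show False using v by simp
    qed
    show "\<exists>!e. e \<in> X - P \<and> v \<in> e"
    proof (rule ex1I[of _ e])
      show "e \<in> X - P \<and> v \<in> e" using e \<open>e \<notin> P\<close> by blast
    next
      fix e' assume "e' \<in> X - P \<and> v \<in> e'"
      then show "e' = e" using matching_edge_unique[OF X, of e' e v] e \<open>v < 2*(k+2)\<close> by blast
    qed
  next
    fix e f assume "e \<in> X - P" "f \<in> X - P"
    then show "\<not> crosses e f" using matching_noncrossing[OF X] by auto
  qed
  with low show ?thesis by blast
qed

lemma matching_add_top_antiblock:
  assumes Z: "is_matching k Z"
  shows "is_matching (k+2) (Z \<union> top_antiblock k)"
proof -
  let ?A = "top_antiblock k"
  have Z_low: "\<And>e x. e \<in> Z \<Longrightarrow> x \<in> e \<Longrightarrow> x < 2*k"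
    using matching_edge_subset[OF Z] by blast
  have A_high: "\<And>e x. e \<in> ?A \<Longrightarrow> x \<in> e \<Longrightarrow> 2*k \<le> x"
    unfolding top_antiblock_def by auto
  have edges: "\<exists>a b. e = {a,b} \<and> a < b \<and> b < 2*(k+2)" if e: "e \<in> Z \<union> ?A" for e
  proof (cases "e \<in> Z")
    case True
    then obtain a b where "e = {a,b}" "a < b" "b < 2*k" using matching_edge[OF Z] by blast
    then show ?thesis by (intro exI[of _ a] exI[of _ b]) auto
  next
    case False
    then have "e = {2*k, 2*k+1} \<or> e = {2*k+2, 2*k+3}" using e by (auto simp: top_antiblock_def)
    moreover have "\<exists>a b. {2*k, 2*k+1} = {a,b} \<and> a < b \<and> b < 2*(k+2)"
      by (intro exI[of _ "2*k"] exI[of _ "2*k+1"]) simp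
    moreover have "\<exists>a b. {2*k+2, 2*k+3} = {a,b} \<and> a < b \<and> b < 2*(k+2)"
      by (intro exI[of _ "2*k+2"] exI[of _ "2*k+3"]) simp
    ultimately show ?thesis by blast
  qed
  have unique: "\<exists>!e. e \<in> Z \<union> ?A \<and> v \<in> e" if v: "v < 2*(k+2)" for v
  proof (cases "v < 2*k")
    case True
    then obtain e where e: "e \<in> Z" "v \<in> e" using Z unfolding is_matching_def by blast
    show ?thesis
    proof (rule ex1I[of _ e])
      show "e \<in> Z \<union> ?A \<and> v \<in> e" using e by blast
    next
      fix e' assume e': "e' \<in> Z \<union> ?A \<and> v \<in> e'"
      then have "e' \<in> Z" using A_high True by force
      then show "e' = e" using matching_edge_unique[OF Z, of e' e v] e e' True by blast
    qed
  next
    case False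
    then have "\<exists>e\<in>?A. v \<in> e" using v unfolding top_antiblock_def by auto
    then obtain e where e: "e \<in> ?A" "v \<in> e" by blast
    have "e' = e" if "e' \<in> Z \<union> ?A" "v \<in> e'" for e'
    proof -
      have "e' \<notin> Z" using that(2) False Z_low by blast
      then have "e' \<in> ?A" using that(1) by blast
      then show ?thesis using e that(2) unfolding top_antiblock_def by auto
    qed
    then show ?thesis using e by blast
  qed
  have noncrossing: "\<not> crosses e f" if e: "e \<in> Z \<union> ?A" and f: "f \<in> Z \<union> ?A" for e f
  proof -
    have mixed: "\<not> crosses e f" if "e \<in> Z" "f \<in> ?A" for e f
      using that Z_low A_high by (intro not_crosses_separated[where L = "2*k"]) auto
    have "\<not> crosses e f" if "e \<in> ?A" "f \<in> ?A"
    proof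
      assume cr: "crosses e f"
      then have "e \<noteq> f" using crosses_disjoint \<open>e \<in> ?A\<close> by (auto simp: top_antiblock_def)
      moreover have "\<not> crosses {2*k, 2*k+1} {2*k+2, 2*k+3}"
        by (rule not_crosses_separated[where L = "2*k+2"]) auto
      ultimately show False using that cr crosses_sym[of e f] by (auto simp: top_antiblock_def)
    qed
    then show ?thesis
      using e f mixed mixed[of f e] crosses_sym[of e f] matching_noncrossing[OF Z] by blast
  qed
  show ?thesis unfolding is_matching_def using edges unique noncrossing by blast
qed

text \<open>In a matching compatible with N, the inner points 2k+1, 2k+2 of the top block
  of N can only be matched with its outer points 2k, 2k+3: the inner edge of
  the block is forbidden and any point below 2k would cross the outer edge.\<close>
lemma compatible_partner_of_inner_point:
  assumes K: "top_block k \<subseteq> N" and dc: "disjoint_compatible N Y"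
    and v: "v = 2*k+1 \<or> v = 2*k+2" and x: "x \<noteq> v" "x < 2*(k+2)" "{v,x} \<in> Y"
  shows "x = 2*k \<or> x = 2*k+3"
proof -
  have outer: "{2*k, 2*k+3} \<in> N" and inner: "{2*k+1, 2*k+2} \<in> N"
    using K by (auto simp: top_block_def)
  have "{v,x} \<noteq> {2*k+1, 2*k+2}" using dc inner x(3) unfolding disjoint_compatible_def by auto
  then have "x \<noteq> 2*k+1" "x \<noteq> 2*k+2" using v x(1) by (auto simp: insert_commute)
  moreover have "\<not> x < 2*k"
  proof
    assume "x < 2*k"
    then have "crosses {2*k, 2*k+3} {x, v}" using v by (intro crosses_intro2) auto
    then show False using dc outer x(3) unfolding disjoint_compatible_def
      by (auto simp: insert_commute)
  qed
  ultimately show ?thesis using x(2) by auto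
qed

text \<open>Hence every matching compatible with N contains the top antiblock: the
  inner points take different outer partners, and the crossing choice
  {2k+1,2k+3}, {2k,2k+2} is excluded.\<close>
lemma compatible_contains_top_antiblock:
  assumes K: "top_block k \<subseteq> N" and Y: "is_matching (k+2) Y" and dc: "disjoint_compatible N Y"
  shows "top_antiblock k \<subseteq> Y"
proof -
  obtain x where x: "x \<noteq> 2*k+1" "x < 2*(k+2)" "{2*k+1, x} \<in> Y"
    using matching_partner[OF Y, of "2*k+1"] by auto
  obtain y where y: "y \<noteq> 2*k+2" "y < 2*(k+2)" "{2*k+2, y} \<in> Y"
    using matching_partner[OF Y, of "2*k+2"] by auto
  have x_outer: "x = 2*k \<or> x = 2*k+3"
    using compatible_partner_of_inner_point[OF K dc _ x] by simp
  have y_outer: "y = 2*k \<or> y = 2*k+3"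
    using compatible_partner_of_inner_point[OF K dc _ y] by simp
  have "x \<noteq> y"
  proof
    assume "x = y"
    then have "{2*k+1, x} = {2*k+2, y}" using matching_edge_unique[OF Y x(3) y(3), of x] x(2) by auto
    then have "2*k+1 \<in> {2*k+2, y}" by blast
    then show False using \<open>x = y\<close> x(1) by simp
  qed
  moreover have "\<not> (x = 2*k+3 \<and> y = 2*k)"
  proof
    assume "x = 2*k+3 \<and> y = 2*k"
    moreover have "crosses {2*k, 2*k+2} {2*k+1, 2*k+3}" by (rule crosses_intro1) auto
    ultimately show False using matching_noncrossing[OF Y y(3) x(3)] by (auto simp: insert_commute)
  qed
  ultimately have "x = 2*k" "y = 2*k+3" using x_outer y_outer by auto
  then show ?thesis using x(3) y(3) by (auto simp: top_antiblock_def insert_commute)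
qed

text \<open>Adding the top antiblock to a matching compatible with N minus its top
  block gives a matching compatible with N: edges below 2k and above 2k never
  cross, and the antiblock shares endpoints with the block.\<close>
lemma compatible_add_top_antiblock:
  assumes low: "\<forall>e\<in>N - top_block k. e \<subseteq> {..<2*k}"
    and Z: "is_matching k Z" and dc: "disjoint_compatible (N - top_block k) Z"
  shows "disjoint_compatible N (Z \<union> top_antiblock k)"
proof -
  let ?K = "top_block k" and ?A = "top_antiblock k"
  have separated: "\<not> crosses e f \<and> \<not> crosses f e \<and> e \<noteq> f"
    if e: "e \<in> N - ?K \<or> e \<in> Z" and f: "f \<in> ?K \<or> f \<in> ?A" for e f
  proof -
    have below: "\<forall>x\<in>e. x < 2*k" using e low matching_edge_subset[OF Z] by blast
    have above: "\<forall>y\<in>f. 2*k \<le> y" using f unfolding top_block_def top_antiblock_def by auto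
    obtain y where "y \<in> f" using f unfolding top_block_def top_antiblock_def by auto
    then have "e \<noteq> f" using below above by fastforce
    then show ?thesis
      using below above not_crosses_separated[of e "2*k" f] crosses_sym[of f e] by blast
  qed
  have K_meets_A: "e \<inter> f \<noteq> {}" if "e \<in> ?K" "f \<in> ?A" for e f
    using that unfolding top_block_def top_antiblock_def by auto
  have "e \<notin> Z \<union> ?A" if e: "e \<in> N" for e
  proof (cases "e \<in> ?K")
    case True
    moreover have "?K \<inter> ?A = {}"
      unfolding top_block_def top_antiblock_def by (auto simp: doubleton_eq_iff)
    ultimately show ?thesis using separated[of e e] by blast
  next
    case False
    then show ?thesis using e dc separated[of e e] unfolding disjoint_compatible_def by blast
  qed
  moreover have "\<not> crosses e f" if e: "e \<in> N" and f: "f \<in> Z \<union> ?A" for e f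
  proof (cases "e \<in> ?K")
    case True
    then show ?thesis using f separated[of f e] K_meets_A[of e f] crosses_disjoint by blast
  next
    case False
    then show ?thesis using e f dc separated[of e f] unfolding disjoint_compatible_def by blast
  qed
  ultimately show ?thesis unfolding disjoint_compatible_def by blast
qed

text \<open>The degree of a matching whose top block is removed: deleting the top
  antiblock is a bijection between the two neighbourhoods in DCM.\<close>
lemma dcm_degree_top_block:
  assumes N: "is_matching (k+2) N" and K: "top_block k \<subseteq> N"
  shows "dcm_degree (k+2) N = dcm_degree k (N - top_block k)"
proof -
  have low: "\<forall>e\<in>N - top_block k. e \<subseteq> {..<2*k}"
    using matching_remove_top[OF N K top_block_covers] by blast
  let ?A = "top_antiblock k"
  let ?S1 = "{Y. is_matching (k+2) Y \<and> disjoint_compatible N Y}"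
  let ?S2 = "{Z. is_matching k Z \<and> disjoint_compatible (N - top_block k) Z}"
  have Z_A_disjoint: "Z \<inter> ?A = {}" if Z: "is_matching k Z" for Z
  proof (rule ccontr)
    assume "Z \<inter> ?A \<noteq> {}"
    then obtain e where e: "e \<in> Z" "e \<in> ?A" by blast
    then have "2*k \<in> e \<or> 2*k+2 \<in> e" unfolding top_antiblock_def by auto
    then show False using matching_edge_subset[OF Z e(1)] by auto
  qed
  have "bij_betw (\<lambda>Y. Y - ?A) ?S1 ?S2"
  proof (rule bij_betw_byWitness[where f' = "\<lambda>Z. Z \<union> ?A"])
    show "\<forall>Y\<in>?S1. Y - ?A \<union> ?A = Y" using compatible_contains_top_antiblock[OF K] by auto
    show "\<forall>Z\<in>?S2. Z \<union> ?A - ?A = Z" using Z_A_disjoint by auto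
    show "(\<lambda>Y. Y - ?A) ` ?S1 \<subseteq> ?S2"
    proof clarify
      fix Y assume Y: "is_matching (k+2) Y" "disjoint_compatible N Y"
      have "is_matching k (Y - ?A)"
        using matching_remove_top[OF Y(1) compatible_contains_top_antiblock[OF K Y] top_antiblock_covers] by blast
      moreover have "disjoint_compatible (N - top_block k) (Y - ?A)"
        using Y(2) unfolding disjoint_compatible_def by auto
      ultimately show "is_matching k (Y - ?A) \<and> disjoint_compatible (N - top_block k) (Y - ?A)"
        by blast
    qed
    show "(\<lambda>Z. Z \<union> ?A) ` ?S2 \<subseteq> ?S1"
      using matching_add_top_antiblock compatible_add_top_antiblock[OF low] by blast
  qed
  then show ?thesis unfolding dcm_degree_def by (simp add: bij_betw_same_card)
qed

section \<open>Rotating a block to the top\<close>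

lemma rotation_of_block_point:
  fixes i m r :: nat assumes "i < m" "4 \<le> m" "r < 4"
  shows "rotation m (m - (i+4) mod m) ((i+r) mod m) = m - 4 + r"
proof -
  have "rotation m (m - (i+4) mod m) ((i+r) mod m) = (i + r + (m - (i+4) mod m)) mod m"
    unfolding rotation_def by (simp add: mod_add_left_eq)
  also have "\<dots> = m - 4 + r"
  proof (cases "i + 4 < m")
    case True
    then show ?thesis using assms by simp
  next
    case False
    then have "(i+4) mod m = i + 4 - m" using assms by (simp add: le_mod_geq)
    then have "i + r + (m - (i+4) mod m) = (m - 4 + r) + m" using False assms by linarith
    moreover have "m - 4 + r < m" using assms by linarith
    ultimately show ?thesis by (simp only: mod_add_self2 mod_less)
  qed
  finally show ?thesis .
qed

lemma remove_block_by_rotation: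
  assumes N: "is_matching (k+2) N" and i: "i < 2*(k+2)" and K: "block_at (k+2) i \<subseteq> N"
  defines "\<rho> \<equiv> rotation (2*(k+2)) (2*(k+2) - (i+4) mod (2*(k+2)))"
  shows "top_block k \<subseteq> relabel \<rho> N"
    and "remove_pair (k+2) i (block_at (k+2) i) N = relabel \<rho> N - top_block k"
proof -
  have block_to_top: "relabel \<rho> (block_at (k+2) i) = top_block k"
    using rotation_of_block_point[OF i, of 0] rotation_of_block_point[OF i, of 1]
      rotation_of_block_point[OF i, of 2] rotation_of_block_point[OF i, of 3]
    unfolding relabel_def block_at_def top_block_def \<rho>_def by simp
  then show "top_block k \<subseteq> relabel \<rho> N"
    using K unfolding relabel_def by blast
  have shift: "(\<lambda>x. (x + 2*(k+2) - (i+4) mod (2*(k+2))) mod (2*(k+2))) = \<rho>"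
    using mod_less_divisor[of "2*(k+2)" "i+4"] unfolding \<rho>_def rotation_def by fastforce
  have inj: "inj_on \<rho> {..<2*(k+2)}"
    using rotation_bij[of "2*(k+2)"] unfolding \<rho>_def by (simp add: bij_betw_def)
  have "inj_on (\<lambda>e. \<rho> ` e) N"
    by (rule inj_onI) (metis N inj inj_on_image_eq_iff matching_edge_subset)
  then have "relabel \<rho> (N - block_at (k+2) i) = relabel \<rho> N - top_block k"
    unfolding relabel_def block_to_top[symmetric] using K by (simp add: inj_on_image_set_diff)
  moreover have "remove_pair (k+2) i (block_at (k+2) i) N = relabel \<rho> (N - block_at (k+2) i)"
    unfolding remove_pair_def relabel_def shift by (rule refl)
  ultimately show "remove_pair (k+2) i (block_at (k+2) i) N = relabel \<rho> N - top_block k"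
    by simp
qed

theorem mainTheorem8:
  fixes k i :: nat and M N :: "nat set set"
  assumes "k \<ge> 1"
    and "is_matching k M"
    and "is_matching (k+2) N"
    and "i < 2*(k+2)"
    and "block_at (k+2) i \<subseteq> N"
    and "\<exists>s. rot (2*k) s M = remove_pair (k+2) i (block_at (k+2) i) N"
  shows "dcm_degree (k+2) N = dcm_degree k M"
proof -
  obtain s where s: "rot (2*k) s M = remove_pair (k+2) i (block_at (k+2) i) N"
    using assms(6) by blast
  define \<rho> where "\<rho> = rotation (2*(k+2)) (2*(k+2) - (i+4) mod (2*(k+2)))"
  note rotation_N = rotation_bij[of "2*(k+2)"] rotation_preserves_cyclic_order[of "2*(k+2)"]
  note rotation_M = rotation_bij[of "2*k"] rotation_preserves_cyclic_order[of "2*k"]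
  have "dcm_degree (k+2) N = dcm_degree (k+2) (relabel \<rho> N)"
    unfolding \<rho>_def using dcm_degree_relabel[OF rotation_N assms(3)] by simp
  also have "\<dots> = dcm_degree k (relabel \<rho> N - top_block k)"
    using dcm_degree_top_block matching_relabel[OF rotation_N assms(3)]
      remove_block_by_rotation(1)[OF assms(3-5)] unfolding \<rho>_def by simp
  also have "relabel \<rho> N - top_block k = relabel (rotation (2*k) s) M"
    using remove_block_by_rotation(2)[OF assms(3-5)] s
    unfolding \<rho>_def rot_def relabel_def rotation_def by simp
  also have "dcm_degree k \<dots> = dcm_degree k M"
    using dcm_degree_relabel[OF rotation_M assms(2)] assms(1) by simp
  finally show ?thesis .
qed

end
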